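(* Let $L\ge1$ be an integer, let $K_1,\dots,K_L\subseteq[N]$ be pairwise disjoint, $x_0=\sum_{i=1}^L i\,\mathbb{1}_{K_i}$, $K=\bigcup_{i=1}^LK_i$, $\hat K=K\setminus K_L$, and $A\in\mathbb{R}^{m\times N}$. The following are equivalent: (i) $x_0$ is the unique solution of $\min\|x\|_1$ subject to $Ax=Ax_0$ and $x\in[0,L]^N$; (ii) every $\hat x\in\mathbb{R}^N$ of the form $\hat x=\tilde x_{\hat K}+L\,\mathbb{1}_{K_L}$ with $\tilde x\in(0,L)^N$ is the unique solution of $\min\|x\|_1$ subject to $Ax=A\hat x$ and $x\in[0,L]^N$.
   Context: $\mathbb{1}_S$ has entries $1$ on $S$, $0$ elsewhere; $\tilde x_{\hat K}$ agrees with $\tilde x$ on $\hat K$ and is zero elsewhere. "Unique solution" means unique minimizer. *)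

theory Defs
  imports "HOL-Analysis.Analysis"
begin

definition l1norm :: "real ^ 'n \<Rightarrow> real" where
  "l1norm x = (\<Sum>i\<in>UNIV. \<bar>x $ i\<bar>)"

definition box_feasible :: "real ^ 'n ^ 'm \<Rightarrow> real \<Rightarrow> real ^ 'n \<Rightarrow> real ^ 'n \<Rightarrow> bool" where
  "box_feasible A L y x \<longleftrightarrow> A *v x = A *v y \<and> (\<forall>i. 0 \<le> x $ i \<and> x $ i \<le> L)"

definition unique_box_l1_solution :: "real ^ 'n ^ 'm \<Rightarrow> real \<Rightarrow> real ^ 'n \<Rightarrow> bool" where
  "unique_box_l1_solution A L y \<longleftrightarrow>
     box_feasible A L y y \<and>
     (\<forall>x. box_feasible A L y x \<longrightarrow> x \<noteq> y \<longrightarrow> l1norm y < l1norm x)"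

definition ind :: "'n set \<Rightarrow> real ^ 'n" where
  "ind S = (\<chi> i. if i \<in> S then 1 else 0)"

definition restr :: "real ^ 'n \<Rightarrow> 'n set \<Rightarrow> real ^ 'n" where
  "restr x S = (\<chi> i. if i \<in> S then x $ i else 0)"

end

theory Submission
  imports Defs
begin

text \<open>On the box \<open>[0,L]\<^sup>N\<close> the \<open>\<ell>\<^sub>1\<close>-norm is the linear functional \<open>x \<mapsto> \<Sum>\<^sub>i x\<^sub>i\<close>, so \<open>y\<close> is the
  unique minimizer iff this functional increases along every nonzero null-space direction that
  stays in the box near \<open>y\<close>. That cone of directions only sees which coordinates of \<open>y\<close> lie
  at \<open>0\<close> and which at \<open>L\<close>. Both \<open>x\<^sub>0\<close> and every vector of (ii) take the value \<open>L\<close> exactly on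
  \<open>K\<^sub>L\<close>, lie strictly inside \<open>(0,L)\<close> on \<open>K - K\<^sub>L\<close> and vanish off \<open>K\<close>, so either all of them are
  unique minimizers or none is.\<close>

definition in_box :: "real \<Rightarrow> real ^ 'n \<Rightarrow> bool" where
  "in_box L x \<longleftrightarrow> (\<forall>i. 0 \<le> x $ i \<and> x $ i \<le> L)"

definition feasible_direction :: "real \<Rightarrow> real ^ 'n \<Rightarrow> real ^ 'n \<Rightarrow> bool" where
  "feasible_direction L y h \<longleftrightarrow> (\<forall>i. (y $ i = 0 \<longrightarrow> 0 \<le> h $ i) \<and> (y $ i = L \<longrightarrow> h $ i \<le> 0))"

definition same_box_face :: "real \<Rightarrow> real ^ 'n \<Rightarrow> real ^ 'n \<Rightarrow> bool" where
  "same_box_face L y z \<longleftrightarrow> in_box L y \<and> in_box L z \<and>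
     (\<forall>i. (y $ i = 0 \<longleftrightarrow> z $ i = 0) \<and> (y $ i = L \<longleftrightarrow> z $ i = L))"

lemma l1norm_in_box:
  fixes x :: "real ^ 'n::finite"
  assumes "in_box L x"
  shows "l1norm x = (\<Sum>i\<in>UNIV. x $ i)"
  using assms by (simp add: l1norm_def in_box_def)

lemma box_feasible_iff_in_box:
  "box_feasible A L y x \<longleftrightarrow> A *v x = A *v y \<and> in_box L x"
  by (simp add: box_feasible_def in_box_def)

lemma eventually_at_right_0_nonneg_line:
  fixes a b :: real
  assumes "0 \<le> a" and "a = 0 \<Longrightarrow> 0 \<le> b"
  shows "\<forall>\<^sub>F t in at_right 0. 0 \<le> a + t * b"
proof (cases "a = 0")
  case True
  with assms(2) have "0 \<le> b" by simp
  with True show ?thesis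
    using eventually_at_right_less[of 0] by (auto elim: eventually_mono)
next
  case False
  have lim: "((\<lambda>t. a + t * b) \<longlongrightarrow> a) (at_right 0)"
    by (auto intro!: tendsto_eq_intros)
  have "0 < a"
    using assms(1) False by simp
  from order_tendstoD(1)[OF lim this] show ?thesis
    by (rule eventually_mono) simp
qed

lemma in_box_step_along_feasible_direction:
  fixes y h :: "real ^ 'n::finite"
  assumes "in_box L y" and "feasible_direction L y h"
  obtains t where "0 < t" and "in_box L (y + t *\<^sub>R h)"
proof -
  have "\<forall>\<^sub>F t in at_right 0. 0 < t \<and> (\<forall>i. 0 \<le> y $ i + t * h $ i \<and> 0 \<le> (L - y $ i) + t * - h $ i)"
    using assms
    by (intro eventually_conj eventually_at_right_less eventually_all_finite allI
          eventually_at_right_0_nonneg_line)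
       (auto simp: in_box_def feasible_direction_def)
  from eventually_happens[OF this] obtain t
    where "0 < t" and t: "\<And>i. 0 \<le> y $ i + t * h $ i \<and> 0 \<le> (L - y $ i) + t * - h $ i"
    by auto
  have "in_box L (y + t *\<^sub>R h)"
    unfolding in_box_def
  proof
    fix i
    show "0 \<le> (y + t *\<^sub>R h) $ i \<and> (y + t *\<^sub>R h) $ i \<le> L"
      using t[of i] by simp
  qed
  with \<open>0 < t\<close> show thesis
    by (rule that)
qed

theorem unique_box_l1_solution_iff_feasible_directions:
  fixes A :: "real ^ 'n::finite ^ 'm" and y :: "real ^ 'n"
  assumes "in_box L y"
  shows "unique_box_l1_solution A L y \<longleftrightarrow>
    (\<forall>h. A *v h = 0 \<longrightarrow> h \<noteq> 0 \<longrightarrow> feasible_direction L y h \<longrightarrow> 0 < (\<Sum>i\<in>UNIV. h $ i))"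
    (is "_ \<longleftrightarrow> ?cone")
proof
  assume unique: "unique_box_l1_solution A L y"
  show ?cone
  proof (intro allI impI)
    fix h :: "real ^ 'n"
    assume "A *v h = 0" "h \<noteq> 0" "feasible_direction L y h"
    obtain t where t: "0 < t" "in_box L (y + t *\<^sub>R h)"
      using in_box_step_along_feasible_direction[OF assms \<open>feasible_direction L y h\<close>] .
    have "box_feasible A L y (y + t *\<^sub>R h)"
      using t \<open>A *v h = 0\<close>
      by (simp add: box_feasible_iff_in_box matrix_vector_right_distrib matrix_vector_mult_scaleR)
    moreover have "y + t *\<^sub>R h \<noteq> y"
      using t \<open>h \<noteq> 0\<close> by simp
    ultimately have "l1norm y < l1norm (y + t *\<^sub>R h)"
      using unique by (simp add: unique_box_l1_solution_def)
    then have "0 < t * (\<Sum>i\<in>UNIV. h $ i)"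
      using assms t by (simp add: l1norm_in_box sum.distrib sum_distrib_left)
    then show "0 < (\<Sum>i\<in>UNIV. h $ i)"
      using t by (simp add: zero_less_mult_iff)
  qed
next
  assume cone: ?cone
  show "unique_box_l1_solution A L y"
    unfolding unique_box_l1_solution_def
  proof (intro conjI allI impI)
    show "box_feasible A L y y"
      using assms by (simp add: box_feasible_iff_in_box)
    fix x
    assume x: "box_feasible A L y x" and "x \<noteq> y"
    then have "A *v (x - y) = 0" "in_box L x"
      by (simp_all add: box_feasible_iff_in_box matrix_vector_mult_diff_distrib)
    moreover have "feasible_direction L y (x - y)"
      using \<open>in_box L x\<close> by (auto simp: feasible_direction_def in_box_def)
    moreover have "x - y \<noteq> 0"
      using \<open>x \<noteq> y\<close> by simp
    ultimately have "0 < (\<Sum>i\<in>UNIV. (x - y) $ i)"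
      using cone by blast
    then show "l1norm y < l1norm x"
      using assms \<open>in_box L x\<close> by (simp add: l1norm_in_box sum_subtractf)
  qed
qed

corollary unique_box_l1_solution_same_face:
  fixes A :: "real ^ 'n::finite ^ 'm"
  assumes "same_box_face L y z"
  shows "unique_box_l1_solution A L y \<longleftrightarrow> unique_box_l1_solution A L z"
proof -
  have "feasible_direction L y = feasible_direction L z"
    using assms by (auto simp: fun_eq_iff feasible_direction_def same_box_face_def)
  with assms show ?thesis
    by (simp add: unique_box_l1_solution_iff_feasible_directions same_box_face_def)
qed

lemma same_box_face_by_levels:
  fixes y z :: "real ^ 'n"
  assumes "0 \<le> L"
    and "\<And>i. i \<in> T \<Longrightarrow> y $ i = L \<and> z $ i = L"
    and "\<And>i. i \<in> M \<Longrightarrow> 0 < y $ i \<and> y $ i < L \<and> 0 < z $ i \<and> z $ i < L"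
    and "\<And>i. i \<notin> T \<Longrightarrow> i \<notin> M \<Longrightarrow> y $ i = 0 \<and> z $ i = 0"
  shows "same_box_face L y z"
proof -
  have "(0 \<le> y $ i \<and> y $ i \<le> L) \<and> (0 \<le> z $ i \<and> z $ i \<le> L) \<and>
        (y $ i = 0 \<longleftrightarrow> z $ i = 0) \<and> (y $ i = L \<longleftrightarrow> z $ i = L)" for i
  proof (cases "i \<in> T")
    case True
    with assms(1) assms(2)[of i] show ?thesis by simp
  next
    case False
    then show ?thesis
      using assms(1) assms(3)[of i] assms(4)[of i] by (cases "i \<in> M") auto
  qed
  then show ?thesis
    by (simp add: same_box_face_def in_box_def)
qed

lemma sum_scaled_ind_component:
  fixes Ks :: "'i \<Rightarrow> 'n::finite set" and c :: "'i \<Rightarrow> real"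
  assumes "finite I" and "disjoint_family_on Ks I" and "k \<in> I" and "j \<in> Ks k"
  shows "(\<Sum>i\<in>I. c i *\<^sub>R ind (Ks i)) $ j = c k"
proof -
  have "(\<Sum>i\<in>I. c i *\<^sub>R ind (Ks i)) $ j = (\<Sum>i\<in>I. if j \<in> Ks i then c i else 0)"
    by (simp add: sum_component ind_def if_distrib cong: if_cong)
  also have "\<dots> = (\<Sum>i\<in>{k}. if j \<in> Ks i then c i else 0)"
    using assms by (intro sum.mono_neutral_right) (auto simp: disjoint_family_on_def)
  finally show ?thesis
    using assms(4) by simp
qed

lemma sum_scaled_ind_component_outside:
  fixes Ks :: "'i \<Rightarrow> 'n::finite set" and c :: "'i \<Rightarrow> real"
  assumes "j \<notin> (\<Union>i\<in>I. Ks i)"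
  shows "(\<Sum>i\<in>I. c i *\<^sub>R ind (Ks i)) $ j = 0"
  using assms by (simp add: sum_component ind_def)

lemma same_box_face_levels_restr:
  fixes L :: nat and Ks :: "nat \<Rightarrow> 'n::finite set" and xt :: "real ^ 'n"
  assumes "L \<ge> 1" and disjoint: "disjoint_family_on Ks {1..L}"
    and xt: "\<forall>i. 0 < xt $ i \<and> xt $ i < real L"
  defines "Khat \<equiv> (\<Union>k\<in>{1..L}. Ks k) - Ks L"
  shows "same_box_face (real L) (\<Sum>k = 1..L. real k *\<^sub>R ind (Ks k))
           (restr xt Khat + real L *\<^sub>R ind (Ks L))"
    (is "same_box_face _ ?x0 ?xhat")
proof (rule same_box_face_by_levels[where T = "Ks L" and M = Khat])
  have x0_level: "?x0 $ i = real k" if "k \<in> {1..L}" "i \<in> Ks k" for i k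
    using sum_scaled_ind_component[OF _ disjoint that] by simp
  fix i
  {
    assume "i \<in> Ks L"
    then show "?x0 $ i = real L \<and> ?xhat $ i = real L"
      using assms(1) x0_level[of L i] by (simp add: Khat_def restr_def ind_def)
  next
    assume "i \<in> Khat"
    then obtain k where "k \<in> {1..L}" "k \<noteq> L" "i \<in> Ks k" "i \<notin> Ks L"
      unfolding Khat_def by blast
    then show "0 < ?x0 $ i \<and> ?x0 $ i < real L \<and> 0 < ?xhat $ i \<and> ?xhat $ i < real L"
      using xt \<open>i \<in> Khat\<close> x0_level[of k i] by (simp add: restr_def ind_def)
  next
    assume "i \<notin> Ks L" "i \<notin> Khat"
    then show "?x0 $ i = 0 \<and> ?xhat $ i = 0"
      using sum_scaled_ind_component_outside[of i Ks "{1..L}"]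
      by (simp add: Khat_def restr_def ind_def)
  }
qed simp

theorem theorem4p3:
  fixes L :: nat
    and Ks :: "nat \<Rightarrow> 'n::finite set"
    and A :: "real ^ 'n ^ 'm"
  assumes "L \<ge> 1"
    and "\<And>i j. i \<in> {1..L} \<Longrightarrow> j \<in> {1..L} \<Longrightarrow> i \<noteq> j \<Longrightarrow> Ks i \<inter> Ks j = {}"
  defines "x0 \<equiv> (\<Sum>i = 1..L. real i *\<^sub>R ind (Ks i))"
    and "K \<equiv> (\<Union>i\<in>{1..L}. Ks i)"
  defines "Khat \<equiv> K - Ks L"
  shows "unique_box_l1_solution A (real L) x0 \<longleftrightarrow>
         (\<forall>xt :: real ^ 'n. (\<forall>i. 0 < xt $ i \<and> xt $ i < real L) \<longrightarrow>
            unique_box_l1_solution A (real L) (restr xt Khat + real L *\<^sub>R ind (Ks L)))"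
proof -
  have disjoint: "disjoint_family_on Ks {1..L}"
    using assms(2) by (auto simp: disjoint_family_on_def)
  have same_face: "same_box_face (real L) x0 (restr xt Khat + real L *\<^sub>R ind (Ks L))"
    if "\<forall>i. 0 < xt $ i \<and> xt $ i < real L" for xt
    unfolding x0_def Khat_def K_def using assms(1) disjoint that by (rule same_box_face_levels_restr)
  define half :: "real ^ 'n" where "half = (\<chi> i. real L / 2)"
  have "\<forall>i. 0 < half $ i \<and> half $ i < real L"
    using assms(1) by (simp add: half_def)
  then show ?thesis
    using same_face unique_box_l1_solution_same_face by blast
qed

end
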